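(* Let $\mathcal{G}(t)$ be a matrix-weighted switching network satisfying Assumption 1 (described in the context), and let $L^k$ denote its matrix-valued Laplacian on $[t_k,t_{k+1})$. For integers $0\le k'<k''$, let $\widetilde{L}_{[t_{k'},t_{k''})}=\frac{1}{t_{k''}-t_{k'}}\int_{t_{k'}}^{t_{k''}}L(t)\,dt$ be the matrix-valued Laplacian of the integral network over $[t_{k'},t_{k''})$. Then $$\mathrm{null}(\widetilde{L}_{[t_{k'},t_{k''})})=\bigcap_{i=1}^{k''-k'}\mathrm{null}(L^{k'+i-1}).$$
   Context: A matrix-weighted switching network $\mathcal{G}(t)=(\mathcal{V},\mathcal{E}(t),A(t))$ has node set $\mathcal{V}=\{1,\dots,n\}$, $n>1$; each edge $(i,j)\in\mathcal{E}(t)$ carries a symmetric weight $A_{ij}(t)\in\mathbb{R}^{d\times d}$ which is either positive (semi-)definite or negative (semi-)definite, with $A_{ij}=A_{ji}$, $A_{ii}=0$, $A_{ij}(t)=0$ if $(i,j)\notin\mathcal{E}(t)$; standing assumption: for each pair $(i,j)$ the weight $A_{ij}(t)$ has the same sign type (PSD for all $t$, or NSD for all $t$). Set $|A_{ij}|=A_{ij}$ if $A_{ij}\succeq0$ and $-A_{ij}$ if $A_{ij}\preceq0$. With $A=[A_{ij}]\in\mathbb{R}^{dn\times dn}$ and $D=\mathrm{diag}(D_1,\dots,D_n)$, $D_i=\sum_{j:(i,j)\in\mathcal{E}}|A_{ij}|$, the matrix-valued Laplacian is $L=D-A$. Assumption 1: there is a sequence $\{t_k\}_{k\in\mathbb{N}}$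 with $t_0=0$, $t_k\to\infty$, $t_{k+1}-t_k\ge\alpha>0$, and $\mathcal{G}(t)$ is constant on each $[t_k,t_{k+1})$. The integral network over $[t_1,t_2)$ has weights $\widetilde{A}=\frac{1}{t_2-t_1}\int_{t_1}^{t_2}A(t)dt$, degree $\widetilde{D}=\frac{1}{t_2-t_1}\int_{t_1}^{t_2}D(t)dt$, and Laplacian $\widetilde{L}=\widetilde{D}-\widetilde{A}$. *)

theory Defs
  imports "HOL-Analysis.Analysis"
begin

text \<open>Nodes are indexed by a finite type 'n, the weight dimension by a finite type 'd.
  A matrix-weighted network is given by its block weight function
  W :: 'n => 'n => real^'d^'d (W i j = A_ij).\<close>

definition psd :: "real^'d^'d \<Rightarrow> bool" where
  "psd M \<longleftrightarrow> transpose M = M \<and> (\<forall>x. 0 \<le> x \<bullet> (M *v x))"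

definition nsd :: "real^'d^'d \<Rightarrow> bool" where
  "nsd M \<longleftrightarrow> transpose M = M \<and> (\<forall>x. x \<bullet> (M *v x) \<le> 0)"

definition mabs :: "real^'d^'d \<Rightarrow> real^'d^'d" where
  "mabs M = (if psd M then M else - M)"

text \<open>Degree block D_i = sum_j |A_ij| (non-edges have zero weight, contributing 0).\<close>
definition degree :: "('n::finite \<Rightarrow> 'n \<Rightarrow> real^'d^'d) \<Rightarrow> 'n \<Rightarrow> real^'d^'d" where
  "degree W i = (\<Sum>j\<in>UNIV. mabs (W i j))"

definition laplacian :: "('n::finite \<Rightarrow> 'n \<Rightarrow> real^'d^'d) \<Rightarrow> 'n \<Rightarrow> 'n \<Rightarrow> real^'d^'d" where
  "laplacian W i j = (if i = j then degree W i else 0) - W i j"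

definition block_null :: "('n::finite \<Rightarrow> 'n \<Rightarrow> real^'d^'d) \<Rightarrow> ('n \<Rightarrow> real^'d) set" where
  "block_null L = {x. \<forall>i. (\<Sum>j\<in>UNIV. L i j *v x j) = 0}"

definition integral_laplacian ::
  "(real \<Rightarrow> 'n::finite \<Rightarrow> 'n \<Rightarrow> real^'d^'d) \<Rightarrow> real \<Rightarrow> real \<Rightarrow> 'n \<Rightarrow> 'n \<Rightarrow> real^'d^'d" where
  "integral_laplacian A a b i j = (1 / (b - a)) *\<^sub>R integral {a..b} (\<lambda>t. laplacian (A t) i j)"

end

theory Submission
  imports Defs
begin

(* On each interval [t_m, t_(m+1)) the network is frozen, so the integral Laplacian over
   [t_k', t_k'') is the convex combination of the Laplacians L^m, k' <= m < k'', with the positive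
   weights (t_(m+1) - t_m) / (t_k'' - t_k').  Writing s_ij = +1 or -1 for the sign type of A_ij,
   the quadratic form of a Laplacian is
     2 x^T L x = sum_ij (x_i - s_ij x_j)^T |A_ij| (x_i - s_ij x_j) >= 0,
   and it vanishes only if every |A_ij| (x_i - s_ij x_j) does, i.e. only if L x = 0.  For a
   positive combination of such semidefinite forms, x is in the kernel iff all summand forms
   vanish at x, which gives the intersection of the kernels. *)

lemma symmetric_matrix_inner_commute:
  fixes M :: "real^'d^'d"
  assumes "transpose M = M"
  shows "z \<bullet> (M *v y) = y \<bullet> (M *v z)"
  by (metis assms dot_lmul_matrix inner_commute transpose_matrix_vector)

lemma psd_quadratic_form_eq_0_imp_mult_eq_0:
  fixes M :: "real^'d^'d"
  assumes "psd M" and "y \<bullet> (M *v y) = 0"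
  shows "M *v y = 0"
proof (rule ccontr)
  define z where "z = M *v y"
  define c where "c = z \<bullet> (M *v z)"
  assume "M *v y \<noteq> 0"
  then have z_pos: "z \<bullet> z > 0" by (simp add: z_def)
  have c_nonneg: "0 \<le> c" using assms(1) by (simp add: psd_def c_def)
  have along_line: "0 \<le> - 2 * t * (z \<bullet> z) + t\<^sup>2 * c" for t :: real
  proof -
    have "y \<bullet> (M *v z) = z \<bullet> z"
      using symmetric_matrix_inner_commute[of M z y] assms(1) by (simp add: psd_def z_def)
    moreover have "0 \<le> (y - t *\<^sub>R z) \<bullet> (M *v (y - t *\<^sub>R z))"
      using assms(1) by (simp add: psd_def)
    ultimately show ?thesis
      using assms(2)
      by (simp add: matrix_vector_mult_diff_distrib matrix_vector_mult_scaleR z_def c_def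
          inner_diff_left inner_diff_right algebra_simps power2_eq_square)
  qed
  \<comment> \<open>For small t > 0 the linear term dominates, contradicting along_line.\<close>
  define t where "t = (z \<bullet> z) / (c + 1)"
  have "t > 0" using z_pos c_nonneg by (simp add: t_def)
  moreover have "t * c < 2 * (z \<bullet> z)"
  proof -
    have "t * c \<le> t * (c + 1)" using \<open>t > 0\<close> by simp
    also have "\<dots> = z \<bullet> z" using c_nonneg by (simp add: t_def)
    finally show ?thesis using z_pos by linarith
  qed
  ultimately have "t\<^sup>2 * c < 2 * t * (z \<bullet> z)" by (simp add: power2_eq_square)
  with along_line[of t] show False by simp
qed

lemma sum_matrix_vector_mult:
  fixes f :: "'a \<Rightarrow> real^'d^'e"
  shows "finite S \<Longrightarrow> sum f S *v x = (\<Sum>m\<in>S. f m *v x)"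
  by (induction S rule: finite_induct) (auto simp: matrix_vector_mult_add_rdistrib)

lemma uminus_matrix_vector_mult: "(- M) *v (x :: real^'d) = - (M *v x)"
  using matrix_vector_mult_diff_rdistrib[of 0 M x] by simp

lemma transpose_uminus: "transpose (- M) = - transpose (M :: real^'d^'e)"
  by (simp add: transpose_def vec_eq_iff)

lemma psd_mabs:
  assumes "psd M \<or> nsd M"
  shows "psd (mabs M)"
  using assms
  by (auto simp: psd_def nsd_def mabs_def transpose_uminus uminus_matrix_vector_mult)

definition weight_sign :: "real^'d^'d \<Rightarrow> real" where
  "weight_sign M = (if psd M then 1 else -1)"

lemma weight_sign_scaleR_mabs: "weight_sign M *\<^sub>R mabs M = M"
  by (simp add: weight_sign_def mabs_def)

lemma weight_sign_square: "weight_sign M * weight_sign M = 1"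
  by (simp add: weight_sign_def)

definition block_quadratic_form ::
  "('n::finite \<Rightarrow> 'n \<Rightarrow> real^'d^'d) \<Rightarrow> ('n \<Rightarrow> real^'d) \<Rightarrow> real" where
  "block_quadratic_form L x = (\<Sum>i\<in>UNIV. x i \<bullet> (\<Sum>j\<in>UNIV. L i j *v x j))"

lemma block_null_conic_combination:
  fixes L :: "'m \<Rightarrow> 'n::finite \<Rightarrow> 'n \<Rightarrow> real^'d^'d"
  assumes "finite S" and pos: "\<And>m. m \<in> S \<Longrightarrow> c m > 0"
    and nonneg: "\<And>m x. m \<in> S \<Longrightarrow> 0 \<le> block_quadratic_form (L m) x"
    and null: "\<And>m x. m \<in> S \<Longrightarrow> block_quadratic_form (L m) x = 0 \<Longrightarrow> x \<in> block_null (L m)"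
  shows "block_null (\<lambda>i j. \<Sum>m\<in>S. c m *\<^sub>R L m i j) = (\<Inter>m\<in>S. block_null (L m))"
proof -
  have row: "(\<Sum>j\<in>UNIV. (\<Sum>m\<in>S. c m *\<^sub>R L m i j) *v x j)
      = (\<Sum>m\<in>S. c m *\<^sub>R (\<Sum>j\<in>UNIV. L m i j *v x j))" for i x
  proof -
    have "(\<Sum>j\<in>UNIV. (\<Sum>m\<in>S. c m *\<^sub>R L m i j) *v x j)
        = (\<Sum>j\<in>UNIV. \<Sum>m\<in>S. c m *\<^sub>R (L m i j *v x j))"
      by (simp only: sum_matrix_vector_mult[OF \<open>finite S\<close>] scaleR_matrix_vector_assoc)
    also have "\<dots> = (\<Sum>m\<in>S. c m *\<^sub>R (\<Sum>j\<in>UNIV. L m i j *v x j))"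
      by (subst sum.swap) (simp add: scaleR_sum_right)
    finally show ?thesis .
  qed
  have form: "block_quadratic_form (\<lambda>i j. \<Sum>m\<in>S. c m *\<^sub>R L m i j) x
      = (\<Sum>m\<in>S. c m * block_quadratic_form (L m) x)" for x
    unfolding block_quadratic_form_def row inner_sum_right inner_scaleR_right sum_distrib_left
    by (rule sum.swap)
  show ?thesis
  proof
    show "block_null (\<lambda>i j. \<Sum>m\<in>S. c m *\<^sub>R L m i j) \<subseteq> (\<Inter>m\<in>S. block_null (L m))"
    proof
      fix x assume "x \<in> block_null (\<lambda>i j. \<Sum>m\<in>S. c m *\<^sub>R L m i j)"
      then have "block_quadratic_form (\<lambda>i j. \<Sum>m\<in>S. c m *\<^sub>R L m i j) x = 0"
        by (simp add: block_quadratic_form_def block_null_def)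
      then have "(\<Sum>m\<in>S. c m * block_quadratic_form (L m) x) = 0"
        by (simp only: form)
      moreover have terms_nonneg: "0 \<le> c m * block_quadratic_form (L m) x" if "m \<in> S" for m
        using pos[OF that] nonneg[OF that] by simp
      ultimately have "\<forall>m\<in>S. c m * block_quadratic_form (L m) x = 0"
        by (simp add: sum_nonneg_eq_0_iff[OF \<open>finite S\<close> terms_nonneg])
      then have "\<forall>m\<in>S. block_quadratic_form (L m) x = 0"
        by (metis pos less_irrefl mult_eq_0_iff)
      then show "x \<in> (\<Inter>m\<in>S. block_null (L m))"
        using null by blast
    qed
    show "(\<Inter>m\<in>S. block_null (L m)) \<subseteq> block_null (\<lambda>i j. \<Sum>m\<in>S. c m *\<^sub>R L m i j)"
      by (auto simp: block_null_def row)
  qed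
qed

lemma laplacian_row_sum:
  "(\<Sum>j\<in>UNIV. laplacian W i j *v x j)
     = (\<Sum>j\<in>UNIV. mabs (W i j) *v (x i - weight_sign (W i j) *\<^sub>R x j))"
proof -
  have "(\<Sum>j\<in>UNIV. laplacian W i j *v x j)
      = (\<Sum>j\<in>UNIV. (if i = j then degree W i *v x i else 0) - W i j *v x j)"
    by (rule sum.cong) (auto simp: laplacian_def matrix_vector_mult_diff_rdistrib)
  also have "\<dots> = degree W i *v x i - (\<Sum>j\<in>UNIV. W i j *v x j)"
    by (simp add: sum_subtractf)
  also have "degree W i *v x i = (\<Sum>j\<in>UNIV. mabs (W i j) *v x i)"
    by (simp add: degree_def sum_matrix_vector_mult)
  also have "(\<Sum>j\<in>UNIV. W i j *v x j)
      = (\<Sum>j\<in>UNIV. mabs (W i j) *v (weight_sign (W i j) *\<^sub>R x j))"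
  proof (rule sum.cong)
    fix j
    have "mabs (W i j) *v (weight_sign (W i j) *\<^sub>R x j)
        = (weight_sign (W i j) *\<^sub>R mabs (W i j)) *v x j"
      by (simp only: matrix_vector_mult_scaleR scaleR_matrix_vector_assoc)
    then show "W i j *v x j = mabs (W i j) *v (weight_sign (W i j) *\<^sub>R x j)"
      by (simp only: weight_sign_scaleR_mabs)
  qed simp
  finally show ?thesis
    by (simp add: sum_subtractf matrix_vector_mult_diff_distrib)
qed

lemma laplacian_quadratic_form:
  assumes "\<And>i j. W i j = W j i"
  shows "2 * block_quadratic_form (laplacian W) x
    = (\<Sum>i\<in>UNIV. \<Sum>j\<in>UNIV. (x i - weight_sign (W i j) *\<^sub>R x j)
        \<bullet> (mabs (W i j) *v (x i - weight_sign (W i j) *\<^sub>R x j)))"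
proof -
  define s where "s i j = weight_sign (W i j)" for i j
  define M where "M i j = mabs (W i j)" for i j
  define e where "e i j = x i - s i j *\<^sub>R x j" for i j
  have form: "block_quadratic_form (laplacian W) x
      = (\<Sum>i\<in>UNIV. \<Sum>j\<in>UNIV. x i \<bullet> (M i j *v e i j))"
    by (simp add: block_quadratic_form_def laplacian_row_sum inner_sum_right M_def e_def s_def)
  have swap_term: "x j \<bullet> (M j i *v e j i) = (- s i j *\<^sub>R x j) \<bullet> (M i j *v e i j)" for i j
  proof -
    have "e j i = - s i j *\<^sub>R e i j"
      using weight_sign_square[of "W i j"]
      by (simp add: e_def s_def assms[of j i] scaleR_diff_right)
    then show ?thesis
      by (simp add: M_def assms[of j i] matrix_vector_mult_scaleR del: scaleR_minus_left)
  qed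
  have "(\<Sum>i\<in>UNIV. \<Sum>j\<in>UNIV. x i \<bullet> (M i j *v e i j))
      = (\<Sum>i\<in>UNIV. \<Sum>j\<in>UNIV. x j \<bullet> (M j i *v e j i))"
    by (rule sum.swap)
  also have "\<dots> = (\<Sum>i\<in>UNIV. \<Sum>j\<in>UNIV. (- s i j *\<^sub>R x j) \<bullet> (M i j *v e i j))"
    by (simp only: swap_term)
  finally have "2 * block_quadratic_form (laplacian W) x
      = (\<Sum>i\<in>UNIV. \<Sum>j\<in>UNIV. x i \<bullet> (M i j *v e i j))
        + (\<Sum>i\<in>UNIV. \<Sum>j\<in>UNIV. (- s i j *\<^sub>R x j) \<bullet> (M i j *v e i j))"
    by (simp add: form)
  also have "\<dots> = (\<Sum>i\<in>UNIV. \<Sum>j\<in>UNIV. e i j \<bullet> (M i j *v e i j))"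
  proof -
    have "x i + (- s i j) *\<^sub>R x j = e i j" for i j by (simp add: e_def)
    then show ?thesis by (simp only: sum.distrib[symmetric] inner_add_left[symmetric])
  qed
  finally show ?thesis by (simp only: e_def M_def s_def)
qed

lemma laplacian_quadratic_form_nonneg:
  assumes "\<And>i j. W i j = W j i" and "\<And>i j. psd (W i j) \<or> nsd (W i j)"
  shows "0 \<le> block_quadratic_form (laplacian W) x"
proof -
  have "0 \<le> 2 * block_quadratic_form (laplacian W) x"
    unfolding laplacian_quadratic_form[of W, OF assms(1)]
    using psd_mabs[OF assms(2)] by (simp add: psd_def sum_nonneg)
  then show ?thesis by simp
qed

lemma laplacian_quadratic_form_eq_0_imp_null:
  assumes "\<And>i j. W i j = W j i" and "\<And>i j. psd (W i j) \<or> nsd (W i j)"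
    and "block_quadratic_form (laplacian W) x = 0"
  shows "x \<in> block_null (laplacian W)"
proof -
  define e where "e i j = x i - weight_sign (W i j) *\<^sub>R x j" for i j
  have terms_nonneg: "0 \<le> e i j \<bullet> (mabs (W i j) *v e i j)" for i j
    using psd_mabs[OF assms(2)] by (simp add: psd_def)
  have "(\<Sum>i\<in>UNIV. \<Sum>j\<in>UNIV. e i j \<bullet> (mabs (W i j) *v e i j)) = 0"
    using laplacian_quadratic_form[of W x, OF assms(1)] assms(3) by (simp add: e_def)
  then have "e i j \<bullet> (mabs (W i j) *v e i j) = 0" for i j
    by (simp add: sum_nonneg_eq_0_iff sum_nonneg terms_nonneg)
  then have "mabs (W i j) *v e i j = 0" for i j
    by (rule psd_quadratic_form_eq_0_imp_mult_eq_0[OF psd_mabs[OF assms(2)]])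
  then show ?thesis by (simp add: block_null_def laplacian_row_sum e_def)
qed

lemma has_integral_const_except_right_endpoint:
  fixes f :: "real \<Rightarrow> 'a::banach"
  assumes "a \<le> b" and "\<And>s. a \<le> s \<Longrightarrow> s < b \<Longrightarrow> f s = c"
  shows "(f has_integral (b - a) *\<^sub>R c) {a..b}"
proof (rule has_integral_spike_finite[of "{b}" "{a..b}" f "\<lambda>_. c"])
  show "((\<lambda>_. c) has_integral (b - a) *\<^sub>R c) {a..b}"
    using has_integral_const_real[of c a b] assms(1) by simp
qed (use assms(2) in auto)

lemma has_integral_piecewise_const:
  fixes f :: "real \<Rightarrow> 'a::banach" and t :: "nat \<Rightarrow> real"
  assumes "incseq t"
    and piecewise: "\<And>m s. t m \<le> s \<Longrightarrow> s < t (Suc m) \<Longrightarrow> f s = g m"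
    and "k \<le> l"
  shows "(f has_integral (\<Sum>m\<in>{k..<l}. (t (Suc m) - t m) *\<^sub>R g m)) {t k..t l}"
  using \<open>k \<le> l\<close>
proof (induction l rule: dec_induct)
  case base
  show ?case using has_integral_null_real[of "t k" "t k" f] by simp
next
  case (step m)
  have "t k \<le> t m" and "t m \<le> t (Suc m)"
    using \<open>incseq t\<close> \<open>k \<le> m\<close> by (simp_all add: incseqD incseq_SucD)
  moreover have "(f has_integral (t (Suc m) - t m) *\<^sub>R g m) {t m..t (Suc m)}"
    using \<open>t m \<le> t (Suc m)\<close> piecewise by (rule has_integral_const_except_right_endpoint)
  ultimately have "(f has_integral (\<Sum>m\<in>{k..<m}. (t (Suc m) - t m) *\<^sub>R g m)
      + (t (Suc m) - t m) *\<^sub>R g m) {t k..t (Suc m)}"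
    using step.IH by (intro has_integral_combine)
  then show ?case using \<open>k \<le> m\<close> by simp
qed

lemma integral_laplacian_piecewise_const:
  fixes A :: "real \<Rightarrow> 'n::finite \<Rightarrow> 'n \<Rightarrow> real^'d^'d" and t :: "nat \<Rightarrow> real"
  assumes "incseq t"
    and piecewise: "\<And>m s. t m \<le> s \<Longrightarrow> s < t (Suc m) \<Longrightarrow> A s = A (t m)"
    and "k \<le> l"
  shows "integral_laplacian A (t k) (t l)
    = (\<lambda>i j. \<Sum>m\<in>{k..<l}. ((t (Suc m) - t m) / (t l - t k)) *\<^sub>R laplacian (A (t m)) i j)"
proof (intro ext)
  fix i j
  have "((\<lambda>s. laplacian (A s) i j) has_integral
      (\<Sum>m\<in>{k..<l}. (t (Suc m) - t m) *\<^sub>R laplacian (A (t m)) i j)) {t k..t l}"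
    using \<open>incseq t\<close> _ \<open>k \<le> l\<close> by (rule has_integral_piecewise_const) (simp add: piecewise)
  then show "integral_laplacian A (t k) (t l) i j
      = (\<Sum>m\<in>{k..<l}. ((t (Suc m) - t m) / (t l - t k)) *\<^sub>R laplacian (A (t m)) i j)"
    by (simp add: integral_laplacian_def integral_unique scaleR_sum_right divide_inverse_commute)
qed

lemma INT_atLeastAtMost_shift_index:
  fixes k l :: nat
  shows "(\<Inter>i\<in>{1..l - k}. N (k + i - 1)) = (\<Inter>m\<in>{k..<l}. N m)"
proof -
  have "{k..<l} = (\<lambda>i. k + i - 1) ` {1..l - k}"
  proof (intro set_eqI iffI)
    fix m assume "m \<in> {k..<l}"
    then show "m \<in> (\<lambda>i. k + i - 1) ` {1..l - k}"
      by (intro image_eqI[of _ _ "m - k + 1"]) auto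
  qed auto
  then show ?thesis by simp
qed

theorem lemma9:
  fixes A :: "real \<Rightarrow> 'n::finite \<Rightarrow> 'n \<Rightarrow> real^'d^'d"
    and tk :: "nat \<Rightarrow> real" and \<alpha> :: real and k' k'' :: nat
  assumes n_gt1: "CARD('n) > 1"
    and sym: "\<And>t i j. 0 \<le> t \<Longrightarrow> transpose (A t i j) = A t i j"
    and psd_or_nsd: "\<And>t i j. 0 \<le> t \<Longrightarrow> psd (A t i j) \<or> nsd (A t i j)"
    and symm_net: "\<And>t i j. 0 \<le> t \<Longrightarrow> A t i j = A t j i"
    and no_loops: "\<And>t i. 0 \<le> t \<Longrightarrow> A t i i = 0"
    and sign_const: "\<And>i j. (\<forall>t\<ge>0. psd (A t i j)) \<or> (\<forall>t\<ge>0. nsd (A t i j))"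
    and t0: "tk 0 = 0"
    and alpha_pos: "\<alpha> > 0"
    and dwell: "\<And>k. tk (Suc k) - tk k \<ge> \<alpha>"
    and t_inf: "filterlim tk at_top sequentially"
    and piecewise: "\<And>k s. tk k \<le> s \<Longrightarrow> s < tk (Suc k) \<Longrightarrow> A s = A (tk k)"
    and kk: "k' < k''"
  shows "block_null (integral_laplacian A (tk k') (tk k''))
         = (\<Inter>i\<in>{1..k'' - k'}. block_null (laplacian (A (tk (k' + i - 1)))))"
proof -
  \<comment> \<open>Each L^m is treated on its own.\<close>
  have gap_pos: "0 < tk (Suc m) - tk m" for m
    using dwell[of m] alpha_pos by linarith
  then have t_mono: "incseq tk"
    by (intro incseq_SucI less_imp_le) simp
  have t_nonneg: "0 \<le> tk m" for m
    using incseqD[OF t_mono, of 0 m] t0 by simp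
  have "tk k' < tk (Suc k')" "tk (Suc k') \<le> tk k''"
    using gap_pos[of k'] incseqD[OF t_mono] kk by auto
  then have span_pos: "0 < tk k'' - tk k'" by simp
  have average: "integral_laplacian A (tk k') (tk k'')
      = (\<lambda>i j. \<Sum>m\<in>{k'..<k''}.
          ((tk (Suc m) - tk m) / (tk k'' - tk k')) *\<^sub>R laplacian (A (tk m)) i j)"
    using t_mono piecewise less_imp_le[OF kk] by (rule integral_laplacian_piecewise_const)
  have net_symmetric: "A (tk m) i j = A (tk m) j i" for m i j
    using symm_net t_nonneg by blast
  have net_semidefinite: "psd (A (tk m) i j) \<or> nsd (A (tk m) i j)" for m i j
    using psd_or_nsd t_nonneg by blast
  show ?thesis
    unfolding average
      INT_atLeastAtMost_shift_index[where N = "\<lambda>m. block_null (laplacian (A (tk m)))"]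
  proof (rule block_null_conic_combination)
    fix m x
    show "0 \<le> block_quadratic_form (laplacian (A (tk m))) x"
      using net_symmetric net_semidefinite by (rule laplacian_quadratic_form_nonneg)
    show "x \<in> block_null (laplacian (A (tk m)))"
      if "block_quadratic_form (laplacian (A (tk m))) x = 0"
      using net_symmetric net_semidefinite that by (rule laplacian_quadratic_form_eq_0_imp_null)
  qed (use gap_pos span_pos in simp_all)
qed

end
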